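(* Let $F\in\Gamma_0^s(\mathbb{R}_+)$ and $a\in(0,1]$, and suppose that $D:=\hat F^a$ is a metric on $[0,+\infty)$. Then there exists $c>0$ such that $F(s)>c|s^a-1|^{1/a}$ for every $s\ge0$, $s\neq1$, and $D$ is a complete metric on $[0,+\infty)$.
   Context: $\Gamma_0(\mathbb{R}_+)$ is the set of functions $F:[0,\infty)\to[0,\infty]$ that are convex, lower semicontinuous, with $F(1)=0$. For $F\in\Gamma_0(\mathbb{R}_+)$: $\mathrm{rec}(F)(r)=\lim_{\alpha\to\infty}F(1+\alpha r)/\alpha$, $F'_\infty:=\mathrm{rec}(F)(1)$; the perspective function is $\hat F(r,t)=tF(r/t)$ for $t>0$, $\hat F(r,0)=\mathrm{rec}(F)(r)$; the reverse entropy is $R(s)=sF(1/s)$ for $s>0$, $R(0)=F'_\infty$. $\Gamma_0^s(\mathbb{R}_+)$ is the set of $F\in\Gamma_0(\mathbb{R}_+)$ with $F=R$; for such $F$, $\hat F$ is symmetric and $\hat F(1,t)=F(t)$. A metric on $[0,\infty)$ is a function $D:[0,\infty)^2\to[0,\infty)$ (finite-valued) with $D(x,y)=0\iff x=y$, symmetric, satisfying the triangle inequality. *)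

theory Defs
  imports "HOL-Analysis.Analysis"
begin

text \<open>Functions F : [0,\<infinity>) \<rightarrow> [0,\<infinity>] are modelled as real \<Rightarrow> ennreal;
  only the values on [0,\<infinity>) matter.\<close>

definition convex_nonneg :: "(real \<Rightarrow> ennreal) \<Rightarrow> bool" where
  "convex_nonneg F \<longleftrightarrow> (\<forall>x y l. 0 \<le> x \<longrightarrow> 0 \<le> y \<longrightarrow> 0 \<le> l \<longrightarrow> l \<le> 1 \<longrightarrow>
      F (l * x + (1 - l) * y) \<le> ennreal l * F x + ennreal (1 - l) * F y)"

definition lsc_nonneg :: "(real \<Rightarrow> ennreal) \<Rightarrow> bool" where
  "lsc_nonneg F \<longleftrightarrow> (\<forall>x. 0 \<le> x \<longrightarrow> F x \<le> Liminf (at x within {0..}) F)"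

definition Gamma0 :: "(real \<Rightarrow> ennreal) set" where
  "Gamma0 = {F. convex_nonneg F \<and> lsc_nonneg F \<and> F 1 = 0}"

definition recF :: "(real \<Rightarrow> ennreal) \<Rightarrow> real \<Rightarrow> ennreal" where
  "recF F r = Lim at_top (\<lambda>\<alpha>::real. F (1 + \<alpha> * r) / ennreal \<alpha>)"

definition Finf :: "(real \<Rightarrow> ennreal) \<Rightarrow> ennreal" where
  "Finf F = recF F 1"

definition persp :: "(real \<Rightarrow> ennreal) \<Rightarrow> real \<Rightarrow> real \<Rightarrow> ennreal" where
  "persp F r t = (if t > 0 then ennreal t * F (r / t) else recF F r)"

definition revF :: "(real \<Rightarrow> ennreal) \<Rightarrow> real \<Rightarrow> ennreal" where
  "revF F s = (if s > 0 then ennreal s * F (1 / s) else Finf F)"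

definition Gamma0s :: "(real \<Rightarrow> ennreal) set" where
  "Gamma0s = {F \<in> Gamma0. \<forall>s\<ge>0. F s = revF F s}"

definition metric_nonneg :: "(real \<Rightarrow> real \<Rightarrow> real) \<Rightarrow> bool" where
  "metric_nonneg D \<longleftrightarrow> (\<forall>x y z. 0 \<le> x \<longrightarrow> 0 \<le> y \<longrightarrow> 0 \<le> z \<longrightarrow>
      0 \<le> D x y \<and> (D x y = 0 \<longleftrightarrow> x = y) \<and> D x y = D y x \<and> D x z \<le> D x y + D y z)"

definition complete_nonneg :: "(real \<Rightarrow> real \<Rightarrow> real) \<Rightarrow> bool" where
  "complete_nonneg D \<longleftrightarrow> (\<forall>u::nat \<Rightarrow> real. (\<forall>n. 0 \<le> u n) \<longrightarrow>
      (\<forall>e>0. \<exists>N. \<forall>m\<ge>N. \<forall>n\<ge>N. D (u m) (u n) < e) \<longrightarrow>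
      (\<exists>x\<ge>0. (\<lambda>n. D (u n) x) \<longlonglongrightarrow> 0))"

end

theory Submission
  imports Defs
begin

text \<open>Since \<open>D 0 y = F(0)\<^sup>a y\<^sup>a\<close>, the triangle inequality through 0 gives
  \<open>D x y \<ge> F(0)\<^sup>a \<bar>x\<^sup>a - y\<^sup>a\<bar>\<close>, and \<open>F(0) > 0\<close> because \<open>D 0 1 \<noteq> 0\<close>; at \<open>y = 1\<close> this is the
  lower bound on \<open>F\<close>. The same estimate makes the \<open>a\<close>-th powers of a \<open>D\<close>-Cauchy sequence
  Cauchy, so the sequence converges to some \<open>x \<ge> 0\<close>; then \<open>D (u n) x \<longrightarrow> 0\<close> because
  \<open>D u x = (x F(u/x))\<^sup>a\<close> for \<open>x > 0\<close> and the convex function \<open>F\<close> is continuous at 1.\<close>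

lemma metric_nonneg_abs_diff_le:
  assumes "metric_nonneg D" and "0 \<le> x" "0 \<le> y" "0 \<le> z"
  shows "\<bar>D z x - D z y\<bar> \<le> D x y"
proof -
  have "D z x \<le> D z y + D y x" "D z y \<le> D z x + D x y" "D y x = D x y"
    using assms unfolding metric_nonneg_def by blast+
  then show ?thesis by linarith
qed

lemma convex_on_enn2real:
  assumes "convex_nonneg F" and finite: "\<And>t. 0 \<le> t \<Longrightarrow> F t \<noteq> \<infinity>"
  shows "convex_on {0..} (\<lambda>t. enn2real (F t))"
  unfolding convex_on_alt
proof (intro conjI ballI allI impI)
  fix x y l :: real
  assume x: "x \<in> {0..}" and y: "y \<in> {0..}" and l: "0 \<le> l \<and> l \<le> 1"
  obtain p q where p: "F x = ennreal p" "0 \<le> p" and q: "F y = ennreal q" "0 \<le> q"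
    using finite x y by (metis atLeast_iff ennreal_cases infinity_ennreal_def)
  have "F (l * x + (1 - l) * y) \<le> ennreal l * F x + ennreal (1 - l) * F y"
    using assms(1) x y l unfolding convex_nonneg_def by auto
  also have "\<dots> = ennreal (l * p + (1 - l) * q)"
    using p q l by (simp flip: ennreal_mult ennreal_plus)
  finally show "enn2real (F (l *\<^sub>R x + (1 - l) *\<^sub>R y))
      \<le> l * enn2real (F x) + (1 - l) * enn2real (F y)"
    using p q l by (simp add: enn2real_leI)
qed simp

locale power_perspective_metric =
  fixes F :: "real \<Rightarrow> ennreal" and a :: real
  assumes convex: "convex_nonneg F" and F_one: "F 1 = 0" and a_pos: "0 < a"
    and persp_finite: "\<And>x y. 0 \<le> x \<Longrightarrow> 0 \<le> y \<Longrightarrow> persp F x y \<noteq> \<infinity>"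
    and metric: "metric_nonneg (\<lambda>x y. enn2real (persp F x y) powr a)"
begin

definition D :: "real \<Rightarrow> real \<Rightarrow> real" where
  "D x y = enn2real (persp F x y) powr a"

definition f :: "real \<Rightarrow> real" where
  "f t = enn2real (F t)"

lemma metric_D: "metric_nonneg D"
  using metric by (simp add: D_def[abs_def])

lemma F_finite: "0 \<le> t \<Longrightarrow> F t \<noteq> \<infinity>"
  using persp_finite[of t 1] by (simp add: persp_def)

lemma F_eq: "0 \<le> t \<Longrightarrow> F t = ennreal (f t)"
  using F_finite by (simp add: f_def ennreal_enn2real_if)

lemma f_nonneg: "0 \<le> f t"
  by (simp add: f_def)

lemma f_one: "f 1 = 0"
  by (simp add: f_def F_one)

lemma D_eq: "0 < y \<Longrightarrow> 0 \<le> x \<Longrightarrow> D x y = (y * f (x / y)) powr a"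
  using F_eq[of "x / y"] f_nonneg[of "x / y"]
  by (simp add: D_def persp_def flip: ennreal_mult)

lemma D_self: "0 \<le> x \<Longrightarrow> D x x = 0"
  using metric_D unfolding metric_nonneg_def by blast

lemma D_commute: "0 \<le> x \<Longrightarrow> 0 \<le> y \<Longrightarrow> D x y = D y x"
  using metric_D unfolding metric_nonneg_def by blast

lemma D_zero_left: "0 \<le> y \<Longrightarrow> D 0 y = f 0 powr a * y powr a"
  by (cases "y = 0") (simp_all add: D_self D_eq powr_mult f_nonneg)

lemma f_zero_pos: "0 < f 0"
proof -
  have "D 0 1 \<noteq> 0"
    using metric_D[unfolded metric_nonneg_def, rule_format, of 0 1 0] by simp
  then show ?thesis
    using D_zero_left[of 1] f_nonneg[of 0] by (auto simp: order_le_less)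
qed

lemma D_lower_bound:
  assumes "0 \<le> x" "0 \<le> y"
  shows "f 0 powr a * \<bar>x powr a - y powr a\<bar> \<le> D x y"
  using metric_nonneg_abs_diff_le[OF metric_D assms order_refl]
  by (simp add: D_zero_left assms abs_mult flip: right_diff_distrib)

lemma f_lower_bound:
  assumes "0 \<le> s"
  shows "f 0 * \<bar>s powr a - 1\<bar> powr (1 / a) \<le> f s"
proof -
  have "f 0 powr a * \<bar>s powr a - 1\<bar> \<le> f s powr a"
    using D_lower_bound[OF assms zero_le_one] D_eq[of 1 s] assms by simp
  then have "(f 0 powr a * \<bar>s powr a - 1\<bar>) powr (1 / a) \<le> (f s powr a) powr (1 / a)"
    using a_pos by (intro powr_mono2) auto
  then show ?thesis
    using a_pos f_nonneg by (simp add: powr_mult powr_powr)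
qed

lemma F_lower_bound:
  "\<exists>c>0. \<forall>s. 0 \<le> s \<longrightarrow> s \<noteq> 1 \<longrightarrow> F s > ennreal (c * \<bar>s powr a - 1\<bar> powr (1 / a))"
proof (intro exI conjI allI impI)
  show "0 < f 0 / 2"
    using f_zero_pos by simp
  fix s :: real
  assume "0 \<le> s" "s \<noteq> 1"
  have "s powr a \<noteq> 1"
    using \<open>0 \<le> s\<close> \<open>s \<noteq> 1\<close> a_pos by (cases "s = 0") auto
  then have "0 < \<bar>s powr a - 1\<bar> powr (1 / a)"
    by simp
  then have "f 0 / 2 * \<bar>s powr a - 1\<bar> powr (1 / a) < f 0 * \<bar>s powr a - 1\<bar> powr (1 / a)"
    using f_zero_pos by (intro mult_strict_right_mono) simp_all
  then have "f 0 / 2 * \<bar>s powr a - 1\<bar> powr (1 / a) < f s"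
    using f_lower_bound[OF \<open>0 \<le> s\<close>] by linarith
  then show "F s > ennreal (f 0 / 2 * \<bar>s powr a - 1\<bar> powr (1 / a))"
    using F_eq[OF \<open>0 \<le> s\<close>] f_zero_pos by (simp add: ennreal_less_iff)
qed

lemma f_isCont_one: "isCont f 1"
proof -
  have "convex_on {0<..} f"
    using convex_on_enn2real[OF convex F_finite] unfolding f_def[abs_def]
    by (rule convex_on_subset) auto
  then have "continuous_on {0<..} f"
    by (intro convex_on_continuous) auto
  then show ?thesis
    by (simp add: continuous_on_eq_continuous_at)
qed

lemma D_tendsto_zero:
  assumes u: "u \<longlonglongrightarrow> x" and u_nonneg: "\<And>n. 0 \<le> u n" and "0 \<le> x"
  shows "(\<lambda>n. D (u n) x) \<longlonglongrightarrow> 0"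
proof (cases "x = 0")
  case True
  have "(\<lambda>n. f 0 powr a * u n powr a) \<longlonglongrightarrow> f 0 powr a * 0 powr a"
    using u True a_pos u_nonneg by (intro tendsto_intros) auto
  then show ?thesis
    using True u_nonneg by (simp add: D_commute D_zero_left)
next
  case False
  with \<open>0 \<le> x\<close> have "0 < x" by simp
  have "(\<lambda>n. u n / x) \<longlonglongrightarrow> 1"
    using tendsto_divide[OF u tendsto_const, of x] \<open>0 < x\<close> by simp
  then have "(\<lambda>n. f (u n / x)) \<longlonglongrightarrow> f 1"
    by (rule isCont_tendsto_compose[OF f_isCont_one])
  then have "(\<lambda>n. (x * f (u n / x)) powr a) \<longlonglongrightarrow> (x * f 1) powr a"
    using a_pos \<open>0 < x\<close> f_nonneg by (intro tendsto_intros) auto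
  then show ?thesis
    using \<open>0 < x\<close> u_nonneg by (simp add: D_eq f_one)
qed

lemma complete_D: "complete_nonneg D"
  unfolding complete_nonneg_def
proof (intro allI impI)
  fix u :: "nat \<Rightarrow> real"
  assume u_nonneg: "\<forall>n. 0 \<le> u n"
    and cauchy: "\<forall>e>0. \<exists>N. \<forall>m\<ge>N. \<forall>n\<ge>N. D (u m) (u n) < e"
  have "Cauchy (\<lambda>n. u n powr a)"
  proof (rule CauchyI)
    fix e :: real
    assume "0 < e"
    then obtain N where N: "\<forall>m\<ge>N. \<forall>n\<ge>N. D (u m) (u n) < f 0 powr a * e"
      using cauchy[rule_format, of "f 0 powr a * e"] f_zero_pos \<open>0 < e\<close> by auto
    have "norm (u m powr a - u n powr a) < e" if "N \<le> m" "N \<le> n" for m n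
    proof -
      have "f 0 powr a * \<bar>u m powr a - u n powr a\<bar> < f 0 powr a * e"
        using D_lower_bound[of "u m" "u n"] N that u_nonneg by fastforce
      then show ?thesis
        using f_zero_pos by simp
    qed
    then show "\<exists>M. \<forall>m\<ge>M. \<forall>n\<ge>M. norm (u m powr a - u n powr a) < e"
      by blast
  qed
  then obtain L where L: "(\<lambda>n. u n powr a) \<longlonglongrightarrow> L"
    by (auto simp: Cauchy_convergent_iff convergent_def)
  have "0 \<le> L"
    using L by (rule LIMSEQ_le_const) auto
  have "(\<lambda>n. (u n powr a) powr (1 / a)) \<longlonglongrightarrow> L powr (1 / a)"
    using L a_pos by (intro tendsto_intros) auto
  then have "u \<longlonglongrightarrow> L powr (1 / a)"
    using u_nonneg a_pos by (simp add: powr_powr)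
  then show "\<exists>x\<ge>0. (\<lambda>n. D (u n) x) \<longlonglongrightarrow> 0"
    using u_nonneg by (intro exI[of _ "L powr (1 / a)"]) (auto intro: D_tendsto_zero)
qed

end

theorem mainTheorem6:
  fixes F :: "real \<Rightarrow> ennreal" and a :: real
  assumes "F \<in> Gamma0s"
    and "0 < a" and "a \<le> 1"
    and "\<forall>x y. 0 \<le> x \<longrightarrow> 0 \<le> y \<longrightarrow> persp F x y \<noteq> \<infinity>"
    and "metric_nonneg (\<lambda>x y. enn2real (persp F x y) powr a)"
  shows "(\<exists>c>0. \<forall>s. 0 \<le> s \<longrightarrow> s \<noteq> 1 \<longrightarrow>
            F s > ennreal (c * \<bar>s powr a - 1\<bar> powr (1 / a)))
         \<and> complete_nonneg (\<lambda>x y. enn2real (persp F x y) powr a)"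
proof -
  interpret power_perspective_metric F a
    using assms unfolding Gamma0s_def Gamma0_def by unfold_locales auto
  show ?thesis
    using F_lower_bound complete_D by (simp add: D_def[abs_def])
qed

end
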